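(* Assume the hypothesis (H3) below holds. Then for any $v\in V_0(E)$ and any finite configuration $\xi$, the function $t\mapsto H_t(\xi)=\dfrac{\det J(\phi^v_t(\xi))}{\det J(\xi)}$ is differentiable and, for $T>0$, $$\sup_{|t|\le T}\Big|\frac{\mathrm dH_t(\xi)}{\mathrm dt}\Big|\le\frac{u_{|\xi|}}{\det J(\xi)},$$ where $(u_n,\,n\ge0)$ is a sequence of nonnegative numbers satisfying $\sum_n\frac{u_n}{n!}|x|^n<\infty$ for all $x\in\mathbb R$.
   Context: $E$ is a domain of $\mathbb R^d$ with Radon measure $\lambda$; $K$ is a bounded symmetric Hilbert–Schmidt integral operator on $L^2(E,\lambda)$, kernel $K(x,y)$, spectrum in $[0,1)$, locally trace class; $\Lambda$ is a fixed compact set and $J(x,y)$ is the kernel of $J_{\Lambda,-1}=(I-K_\Lambda)^{-1}K_\Lambda$, $K_\Lambda=P_\Lambda KP_\Lambda$. For $\xi=\{x_1,\dots,x_n\}$, $\det J(\xi)=\det(J(x_i,x_k))_{i,k}$ and $|\xi|=n$; $U(\xi)=-\log\det J(\xi)$. $V_0(E)$: smooth compactly supported vector fields; $\phi^v_t$ the flow of $v$, acting on configurations atom by atom. $\nabla_vU(\xi)=\frac{\mathrm d}{\mathrm dt}U(\phi^v_t(\xi))|_{t=0}$. Hypothesis (H3): $U$ is differentiable at every finite configuration, and for any $v\in V_0(E)$ there is $c>0$ such that for all finite $\xi$, $|\nabla_vU(\xi)|\le u_{|\xi|}/\det J(\xi)$ with $u_n=c\,n^{n/2}$ (a sequence with $\sum_n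 u_n|x|^n/n!<\infty$ for all $x$). *)

theory Defs
  imports "HOL-Analysis.Analysis"
begin

text \<open>det J(xi): determinant of the matrix (J(x_i,x_k)) indexed by the points of the
  finite configuration xi (Leibniz formula; independent of any enumeration).\<close>
definition detJ :: "('a \<Rightarrow> 'a \<Rightarrow> real) \<Rightarrow> 'a set \<Rightarrow> real" where
  "detJ J \<xi> = (\<Sum>p\<in>{p. p permutes \<xi>}. of_int (sign p) * (\<Prod>x\<in>\<xi>. J x (p x)))"

definition Upot :: "('a \<Rightarrow> 'a \<Rightarrow> real) \<Rightarrow> 'a set \<Rightarrow> real" where
  "Upot J \<xi> = - ln (detJ J \<xi>)"

fun iter_dderiv :: "('a::real_normed_vector \<Rightarrow> 'b::real_normed_vector) \<Rightarrow> 'a list \<Rightarrow> 'a \<Rightarrow> 'b" where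
  "iter_dderiv f [] = f"
| "iter_dderiv f (u # us) = (\<lambda>x. frechet_derivative (iter_dderiv f us) (at x) u)"

definition smooth_fun :: "('a::real_normed_vector \<Rightarrow> 'b::real_normed_vector) \<Rightarrow> bool" where
  "smooth_fun f \<longleftrightarrow> (\<forall>us x. iter_dderiv f us differentiable (at x))"

definition V0 :: "'a::euclidean_space set \<Rightarrow> ('a \<Rightarrow> 'a) set" where
  "V0 E = {v. smooth_fun v \<and> compact (closure {x. v x \<noteq> 0}) \<and> closure {x. v x \<noteq> 0} \<subseteq> E}"

definition flow :: "('a::euclidean_space \<Rightarrow> 'a) \<Rightarrow> real \<Rightarrow> 'a \<Rightarrow> 'a" where
  "flow v t x = (THE \<gamma>. \<gamma> 0 = x \<and> (\<forall>s. (\<gamma> has_vector_derivative v (\<gamma> s)) (at s))) t"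

definition flow_conf :: "('a::euclidean_space \<Rightarrow> 'a) \<Rightarrow> real \<Rightarrow> 'a set \<Rightarrow> 'a set" where
  "flow_conf v t \<xi> = flow v t ` \<xi>"

definition gradU :: "('a \<Rightarrow> 'a \<Rightarrow> real) \<Rightarrow> ('a::euclidean_space \<Rightarrow> 'a) \<Rightarrow> 'a set \<Rightarrow> real" where
  "gradU J v \<xi> = deriv (\<lambda>t. Upot J (flow_conf v t \<xi>)) 0"

definition Hfun :: "('a \<Rightarrow> 'a \<Rightarrow> real) \<Rightarrow> ('a::euclidean_space \<Rightarrow> 'a) \<Rightarrow> 'a set \<Rightarrow> real \<Rightarrow> real" where
  "Hfun J v \<xi> t = detJ J (flow_conf v t \<xi>) / detJ J \<xi>"

text \<open>Hypothesis (H3). U is (finite, i.e. det J > 0, and) differentiable at every finite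
  configuration (along flows of fields in V_0(E)), and the gradient bound holds with
  u_n = c n^(n/2).\<close>
definition H3 :: "'a::euclidean_space set \<Rightarrow> ('a \<Rightarrow> 'a \<Rightarrow> real) \<Rightarrow> bool" where
  "H3 E J \<longleftrightarrow>
     (\<forall>\<xi>. finite \<xi> \<and> \<xi> \<subseteq> E \<longrightarrow> detJ J \<xi> > 0)
   \<and> (\<forall>v\<in>V0 E. \<forall>\<xi>. finite \<xi> \<and> \<xi> \<subseteq> E \<longrightarrow>
        (\<lambda>t. Upot J (flow_conf v t \<xi>)) differentiable (at 0))
   \<and> (\<forall>v\<in>V0 E. \<exists>c>0. \<forall>\<xi>. finite \<xi> \<and> \<xi> \<subseteq> E \<longrightarrow>
        \<bar>gradU J v \<xi>\<bar> \<le> c * sqrt (real (card \<xi>)) ^ card \<xi> / detJ J \<xi>)"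

end

theory Submission
  imports Defs
begin

text \<open>By (H3), \<open>det J > 0\<close> on finite configurations in \<open>E\<close>, so
  \<open>H\<^sub>t(\<xi>) = exp (- U(\<phi>\<^sub>t \<xi>)) / det J(\<xi>)\<close>. A field \<open>v \<in> V\<^sub>0(E)\<close> is bounded and globally
  Lipschitz, so its flow exists (Picard iteration), is unique (Gronwall) and is a one-parameter
  group of injections which preserves \<open>E\<close> because \<open>v\<close> vanishes outside \<open>E\<close>. From
  \<open>\<phi>\<^sub>s \<xi> = \<phi>\<^sub>s\<^sub>-\<^sub>t (\<phi>\<^sub>t \<xi>)\<close> the derivative of \<open>H\<close> at \<open>t\<close> is
  \<open>- det J(\<phi>\<^sub>t \<xi>) \<nabla>\<^sub>vU(\<phi>\<^sub>t \<xi>) / det J(\<xi>)\<close>, and (H3) at the configuration \<open>\<phi>\<^sub>t \<xi>\<close>, which has as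
  many points as \<open>\<xi>\<close>, bounds it by \<open>u\<^sub>|\<^sub>\<xi>\<^sub>| / det J(\<xi>)\<close> with \<open>u\<^sub>n = c n\<^sup>n\<^sup>/\<^sup>2\<close>. Finally
  \<open>\<Sum> u\<^sub>n x\<^sup>n / n!\<close> converges because \<open>n\<^sup>n \<le> e\<^sup>n n!\<close>.\<close>

section \<open>Picard iteration\<close>

lemma has_integral_power_0:
  assumes "(t::real) \<ge> 0"
  shows "((\<lambda>s. s ^ n) has_integral t ^ Suc n / real (Suc n)) {0..t}"
proof -
  have "((\<lambda>s. s ^ Suc n / real (Suc n)) has_real_derivative s ^ n) (at s within {0..t})" for s
    by (intro derivative_eq_intros) (auto simp: field_simps simp del: of_nat_Suc)
  then have "((\<lambda>s. s ^ n) has_integral ((\<lambda>s. s ^ Suc n / real (Suc n)) t - (\<lambda>s. s ^ Suc n / real (Suc n)) 0)) {0..t}"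
    by (intro fundamental_theorem_of_calculus[OF assms])
      (simp add: has_real_derivative_iff_has_vector_derivative)
  then show ?thesis by simp
qed

fun picard :: "('a::euclidean_space \<Rightarrow> 'a) \<Rightarrow> 'a \<Rightarrow> nat \<Rightarrow> real \<Rightarrow> 'a" where
  "picard f x0 0 = (\<lambda>t. x0)"
| "picard f x0 (Suc k) = (\<lambda>t. x0 + integral {0..t} (\<lambda>s. f (picard f x0 k s)))"

definition picard_limit :: "('a::euclidean_space \<Rightarrow> 'a) \<Rightarrow> 'a \<Rightarrow> real \<Rightarrow> 'a" where
  "picard_limit f x0 t = lim (\<lambda>k. picard f x0 k t)"

lemma picard_zero: "picard f x0 k 0 = x0"
  by (cases k) auto

lemma picard_continuous_on:
  assumes "continuous_on UNIV f"
  shows "continuous_on {0..b} (picard f x0 k)"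
proof (induction k)
  case (Suc k)
  have "continuous_on {0..b} (\<lambda>s. f (picard f x0 k s))"
    using continuous_on_compose2[OF assms Suc.IH] by auto
  then show ?case
    unfolding picard.simps
    using integral_has_vector_derivative has_vector_derivative_continuous
      continuous_on_eq_continuous_within
    by (intro continuous_on_add continuous_on_const) blast
qed simp

lemma picard_integrable:
  assumes "continuous_on UNIV f"
  shows "(\<lambda>s. f (picard f x0 k s)) integrable_on {0..t}"
  by (rule integrable_continuous_real, rule continuous_on_compose2[OF assms picard_continuous_on[OF assms]])
    auto

locale bounded_lipschitz_field =
  fixes v :: "'a::euclidean_space \<Rightarrow> 'a" and L M :: real
  assumes lipschitz: "\<And>x y. norm (v x - v y) \<le> L * norm (x - y)"
    and L_pos: "L > 0"
    and bounded: "\<And>x. norm (v x) \<le> M"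
begin

lemma continuous_on_field: "continuous_on UNIV v"
  by (rule lipschitz_on_continuous_on[of L])
    (auto intro!: lipschitz_onI simp: dist_norm lipschitz less_imp_le[OF L_pos])

lemma M_nonneg: "M \<ge> 0"
  using bounded[of 0] norm_ge_zero[of "v 0"] by linarith

lemma picard_step_bound:
  "t \<ge> 0 \<Longrightarrow> norm (picard v x0 (Suc k) t - picard v x0 k t) \<le> M * L ^ k * t ^ Suc k / fact (Suc k)"
proof (induction k arbitrary: t)
  case 0
  have "norm (integral {0..t} (\<lambda>s. v x0)) \<le> integral {0..t} (\<lambda>s. M)"
    by (rule integral_norm_bound_integral) (auto simp: bounded)
  then show ?case using 0 by (simp add: mult.commute)
next
  case (Suc k)
  let ?g = "\<lambda>s. v (picard v x0 (Suc k) s) - v (picard v x0 k s)"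
  let ?h = "\<lambda>s. (L * M * L ^ k / fact (Suc k)) * s ^ Suc k"
  note int = picard_integrable[OF continuous_on_field]
  have "integral {0..t} ?g = integral {0..t} (\<lambda>s. v (picard v x0 (Suc k) s)) -
      integral {0..t} (\<lambda>s. v (picard v x0 k s))"
    by (rule integral_diff; rule int)
  then have "picard v x0 (Suc (Suc k)) t - picard v x0 (Suc k) t = integral {0..t} ?g"
    by (simp only: picard.simps(2)) simp
  also have "norm \<dots> \<le> integral {0..t} ?h"
  proof (rule integral_norm_bound_integral)
    show "?g integrable_on {0..t}" by (intro integrable_diff int)
    show "?h integrable_on {0..t}" by (intro integrable_continuous_real continuous_intros)
    fix s assume s: "s \<in> {0..t}"
    have "norm (?g s) \<le> L * norm (picard v x0 (Suc k) s - picard v x0 k s)" by (rule lipschitz)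
    also have "\<dots> \<le> L * (M * L ^ k * s ^ Suc k / fact (Suc k))"
      using mult_left_mono[OF Suc.IH[of s]] L_pos s by auto
    finally show "norm (?g s) \<le> ?h s" by (simp add: field_simps)
  qed
  also have "integral {0..t} ?h = (L * M * L ^ k / fact (Suc k)) * (t ^ Suc (Suc k) / real (Suc (Suc k)))"
    by (rule integral_unique, rule has_integral_mult_right, rule has_integral_power_0[OF Suc.prems])
  also have "\<dots> = M * L ^ Suc k * t ^ Suc (Suc k) / fact (Suc (Suc k))"
    by (simp add: field_simps)
  finally show ?case .
qed

lemma picard_convergent:
  assumes "t \<ge> 0"
  shows "convergent (\<lambda>k. picard v x0 k t)"
proof -
  let ?d = "\<lambda>j. picard v x0 (Suc j) t - picard v x0 j t"
  have "summable (\<lambda>j. (M / L) * (inverse (fact (Suc j)) * (L * t) ^ Suc j))"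
    using summable_exp[of "L * t"] by (subst (asm) summable_Suc_iff[symmetric]) (rule summable_mult)
  also have "(\<lambda>j. (M / L) * (inverse (fact (Suc j)) * (L * t) ^ Suc j)) =
      (\<lambda>j. M * L ^ j * t ^ Suc j / fact (Suc j))"
    using L_pos by (simp add: fun_eq_iff power_mult_distrib divide_inverse)
  finally have "summable ?d"
    by (rule summable_comparison_test[rotated]) (use picard_step_bound assms in blast)
  then have "(\<lambda>k. (\<Sum>j<k. ?d j) + x0) \<longlonglongrightarrow> suminf ?d + x0"
    by (intro tendsto_intros summable_LIMSEQ)
  moreover have "(\<Sum>j<k. ?d j) + x0 = picard v x0 k t" for k
    by (subst sum_lessThan_telescope) (simp add: picard_zero)
  ultimately show ?thesis unfolding convergent_def by auto
qed

lemma picard_limit: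
  "t \<ge> 0 \<Longrightarrow> (\<lambda>k. picard v x0 k t) \<longlonglongrightarrow> picard_limit v x0 t"
  unfolding picard_limit_def using picard_convergent convergent_LIMSEQ_iff by blast

lemma picard_limit_zero: "picard_limit v x0 0 = x0"
  using picard_limit[of 0 x0] by (simp add: picard_zero LIMSEQ_const_iff)

lemma picard_limit_integral_equation:
  assumes t: "t \<ge> 0"
  shows "(\<lambda>s. v (picard_limit v x0 s)) integrable_on {0..t}"
    and "picard_limit v x0 t = x0 + integral {0..t} (\<lambda>s. v (picard_limit v x0 s))"
proof -
  let ?f = "\<lambda>s. v (picard_limit v x0 s)"
  have conv: "(\<lambda>k. v (picard v x0 k s)) \<longlonglongrightarrow> ?f s" if "s \<in> {0..t}" for s
    using that continuous_on_field picard_limit[of s]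
    by (intro isCont_tendsto_compose[of _ v]) (auto simp: continuous_on_eq_continuous_at)
  have int: "(\<lambda>s. v (picard v x0 k s)) integrable_on {0..t}" for k
    by (rule picard_integrable[OF continuous_on_field])
  have bnd: "norm (v (picard v x0 k s)) \<le> M" for k s
    by (rule bounded)
  note dc = dominated_convergence[where h = "\<lambda>_. M", OF int integrable_const_ivl bnd conv]
  show "?f integrable_on {0..t}" using dc(1) by simp
  have "(\<lambda>k. picard v x0 (Suc k) t) \<longlonglongrightarrow> x0 + integral {0..t} (\<lambda>s. v (picard_limit v x0 s))"
    unfolding picard.simps by (intro tendsto_intros dc(2))
  moreover have "(\<lambda>k. picard v x0 (Suc k) t) \<longlonglongrightarrow> picard_limit v x0 t"
    using LIMSEQ_Suc[OF picard_limit[OF t]] .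
  ultimately show "picard_limit v x0 t = x0 + integral {0..t} (\<lambda>s. v (picard_limit v x0 s))"
    using LIMSEQ_unique by blast
qed

lemma picard_limit_lipschitz: "M-lipschitz_on {0..} (picard_limit v x0)"
proof -
  have increment: "norm (picard_limit v x0 t - picard_limit v x0 s) \<le> M * (t - s)"
    if "0 \<le> s" "s \<le> t" for s t
  proof -
    let ?f = "\<lambda>s. v (picard_limit v x0 s)"
    have int: "?f integrable_on {0..t}" using picard_limit_integral_equation that by auto
    have "picard_limit v x0 t - picard_limit v x0 s = integral {s..t} ?f"
      using Henstock_Kurzweil_Integration.integral_combine[OF that int]
        picard_limit_integral_equation(2)[of s] picard_limit_integral_equation(2)[of t] that
      by (auto simp: algebra_simps)
    also have "norm \<dots> \<le> integral {s..t} (\<lambda>_. M)"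
      by (rule integral_norm_bound_integral[OF integrable_subinterval_real[OF int]])
        (use that bounded in auto)
    finally show ?thesis using that by (simp add: mult.commute)
  qed
  show ?thesis
  proof (rule lipschitz_onI[OF _ M_nonneg])
    fix s t :: real assume "s \<in> {0..}" "t \<in> {0..}"
    then show "dist (picard_limit v x0 s) (picard_limit v x0 t) \<le> M * dist s t"
      using increment[of s t] increment[of t s]
      by (cases "s \<le> t") (auto simp: dist_norm norm_minus_commute abs_if)
  qed
qed

lemma picard_limit_has_vector_derivative:
  assumes t: "t \<ge> 0"
  shows "(picard_limit v x0 has_vector_derivative v (picard_limit v x0 t)) (at t within {0..})"
proof -
  let ?f = "\<lambda>s. v (picard_limit v x0 s)"
  have "continuous_on {0..} ?f"
    using continuous_on_compose2[OF continuous_on_field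
        lipschitz_on_continuous_on[OF picard_limit_lipschitz]] by auto
  then have "((\<lambda>u. x0 + integral {0..u} ?f) has_vector_derivative ?f t) (at t within {0..t+1})"
    using integral_has_vector_derivative[OF continuous_on_subset, of "{0..}" ?f 0 "t+1" t] t
    by (auto intro!: derivative_eq_intros)
  then have "(picard_limit v x0 has_vector_derivative ?f t) (at t within {0..t+1})"
    by (rule has_vector_derivative_transform[rotated 2])
      (use t picard_limit_integral_equation(2) in auto)
  moreover have "at t within {0..t+1} = at t within {0..}"
    by (rule at_within_nhd[of _ "{t-1<..<t+1}"]) auto
  ultimately show ?thesis by simp
qed

end

section \<open>The flow of a bounded Lipschitz field\<close>

text \<open>Gronwall: \<open>exp (\<mp>K s) n s\<close> is monotone on either side of \<open>0\<close>, where it vanishes.\<close>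
lemma derivative_bounded_by_self_imp_zero:
  fixes n D :: "real \<Rightarrow> real"
  assumes dn: "\<And>s. (n has_real_derivative D s) (at s)"
    and bound: "\<And>s. \<bar>D s\<bar> \<le> K * n s"
    and nonneg: "\<And>s. n s \<ge> 0"
    and n0: "n 0 = 0"
  shows "n t = 0"
proof -
  have "n t \<le> 0"
  proof (cases "t \<ge> 0")
    case True
    let ?g = "\<lambda>s. - (exp (- (K * s)) * n s)"
    have "?g 0 \<le> ?g t"
    proof (rule deriv_nonneg_imp_mono[of 0 t ?g "\<lambda>s. exp (- (K * s)) * (K * n s - D s)"])
      fix s
      show "(?g has_real_derivative exp (- (K * s)) * (K * n s - D s)) (at s)"
        by (rule derivative_eq_intros dn refl | simp add: algebra_simps)+
      show "exp (- (K * s)) * (K * n s - D s) \<ge> 0"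
        using bound[of s] by (intro mult_nonneg_nonneg) auto
    qed (use True in auto)
    then show ?thesis using n0 by (simp add: mult_le_0_iff)
  next
    case False
    let ?g = "\<lambda>s. exp (K * s) * n s"
    have "?g t \<le> ?g 0"
    proof (rule deriv_nonneg_imp_mono[of t 0 ?g "\<lambda>s. exp (K * s) * (K * n s + D s)"])
      fix s
      show "(?g has_real_derivative exp (K * s) * (K * n s + D s)) (at s)"
        by (rule derivative_eq_intros dn refl | simp add: algebra_simps)+
      show "exp (K * s) * (K * n s + D s) \<ge> 0"
        using bound[of s] by (intro mult_nonneg_nonneg) auto
    qed (use False in auto)
    then show ?thesis using n0 by (simp add: mult_le_0_iff)
  qed
  then show ?thesis using nonneg[of t] by linarith
qed

lemma bounded_lipschitz_field_uminus:
  "bounded_lipschitz_field v L M \<Longrightarrow> bounded_lipschitz_field (\<lambda>x. - v x) L M"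
  unfolding bounded_lipschitz_field_def by (metis minus_diff_minus norm_minus_cancel norm_minus_commute)

context bounded_lipschitz_field
begin

lemma reflected_picard_limit_has_vector_derivative:
  assumes "s \<le> 0"
  shows "((\<lambda>t. picard_limit (\<lambda>x. - v x) x0 (- t)) has_vector_derivative
      v (picard_limit (\<lambda>x. - v x) x0 (- s))) (at s within {..0})"
proof -
  interpret backward: bounded_lipschitz_field "\<lambda>x. - v x" L M
    using bounded_lipschitz_field_axioms by (rule bounded_lipschitz_field_uminus)
  have "uminus ` {..(0::real)} = {0..}" by (auto intro: image_eqI[of _ _ "- _"])
  then have "(picard_limit (\<lambda>x. - v x) x0 has_vector_derivative - v (picard_limit (\<lambda>x. - v x) x0 (- s)))
      (at (- s) within uminus ` {..0})"
    using backward.picard_limit_has_vector_derivative[of "- s"] assms by simp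
  moreover have "(uminus has_vector_derivative (-1)) (at s within {..0})"
    by (auto simp: has_real_derivative_iff_has_vector_derivative[symmetric] intro!: derivative_eq_intros)
  ultimately show ?thesis
    using vector_diff_chain_within by (fastforce simp: o_def)
qed

lemma ode_solution_exists:
  "\<exists>\<gamma>. \<gamma> 0 = x0 \<and> (\<forall>s. (\<gamma> has_vector_derivative v (\<gamma> s)) (at s))"
proof -
  let ?\<gamma>1 = "picard_limit v x0" and ?\<gamma>2 = "\<lambda>t. picard_limit (\<lambda>x. - v x) x0 (- t)"
  define \<gamma> where "\<gamma> t = (if t \<in> {0..} then ?\<gamma>1 t else ?\<gamma>2 t)" for t
  have backward_zero: "picard_limit (\<lambda>x. - v x) x0 0 = x0"
    using bounded_lipschitz_field_uminus[OF bounded_lipschitz_field_axioms]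
    by (rule bounded_lipschitz_field.picard_limit_zero)
  have closures: "{0..} \<union> closure {0..} \<inter> closure {..<0} = {0::real..}"
    "{..<0} \<union> closure {0..} \<inter> closure {..<0} = {..0::real}"
    by (auto simp: closure_closed)
  have "(\<gamma> has_vector_derivative v (\<gamma> s)) (at s)" for s
  proof -
    have "(\<gamma> has_vector_derivative (if s \<in> {0..} then v (?\<gamma>1 s) else v (?\<gamma>2 s))) (at s within UNIV)"
      unfolding \<gamma>_def[abs_def]
    proof (rule has_vector_derivative_If_within_closures[where T = "{..<0}"])
      show "(?\<gamma>1 has_vector_derivative v (?\<gamma>1 s)) (at s within {0..} \<union> closure {0..} \<inter> closure {..<0})"
        if "s \<in> {0..} \<union> closure {0..} \<inter> closure {..<0}"
        using that picard_limit_has_vector_derivative[of s] unfolding closures by simp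
      show "(?\<gamma>2 has_vector_derivative v (?\<gamma>2 s)) (at s within {..<0} \<union> closure {0..} \<inter> closure {..<0})"
        if "s \<in> {..<0} \<union> closure {0..} \<inter> closure {..<0}"
        using that reflected_picard_limit_has_vector_derivative[of s] unfolding closures by simp
    qed (auto simp: closure_closed picard_limit_zero backward_zero)
    then show ?thesis by (simp only: \<gamma>_def[of s] if_distrib[of v])
  qed
  moreover have "\<gamma> 0 = x0" by (simp add: \<gamma>_def picard_limit_zero)
  ultimately show ?thesis by blast
qed

lemma ode_solution_unique:
  assumes d1: "\<And>s. (\<gamma>1 has_vector_derivative v (\<gamma>1 s)) (at s)"
    and d2: "\<And>s. (\<gamma>2 has_vector_derivative v (\<gamma>2 s)) (at s)"
    and "\<gamma>1 0 = \<gamma>2 0"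
  shows "\<gamma>1 t = \<gamma>2 t"
proof -
  define \<delta> where "\<delta> s = \<gamma>1 s - \<gamma>2 s" for s
  define w where "w s = v (\<gamma>1 s) - v (\<gamma>2 s)" for s
  have d\<delta>: "(\<delta> has_vector_derivative w s) (at s)" for s
    unfolding \<delta>_def w_def by (intro has_vector_derivative_diff d1 d2)
  have "\<delta> t \<bullet> \<delta> t = 0"
  proof (rule derivative_bounded_by_self_imp_zero[where n = "\<lambda>s. \<delta> s \<bullet> \<delta> s"])
    show "((\<lambda>s. \<delta> s \<bullet> \<delta> s) has_real_derivative 2 * (\<delta> s \<bullet> w s)) (at s)" for s
    proof -
      have "((\<lambda>s. \<delta> s \<bullet> \<delta> s) has_derivative (\<lambda>h. \<delta> s \<bullet> (h *\<^sub>R w s) + (h *\<^sub>R w s) \<bullet> \<delta> s)) (at s)"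
        using d\<delta>[of s, unfolded has_vector_derivative_def] by (intro has_derivative_inner) auto
      then show ?thesis unfolding has_field_derivative_def
        by (rule has_derivative_eq_rhs) (auto simp: inner_commute algebra_simps fun_eq_iff)
    qed
    show "\<bar>2 * (\<delta> s \<bullet> w s)\<bar> \<le> 2 * L * (\<delta> s \<bullet> \<delta> s)" for s
    proof -
      have "\<bar>\<delta> s \<bullet> w s\<bar> \<le> norm (\<delta> s) * norm (w s)" by (rule Cauchy_Schwarz_ineq2)
      also have "\<dots> \<le> norm (\<delta> s) * (L * norm (\<delta> s))"
        unfolding w_def \<delta>_def by (intro mult_left_mono lipschitz) auto
      also have "\<dots> = L * (\<delta> s \<bullet> \<delta> s)" by (simp add: power2_norm_eq_inner[symmetric] power2_eq_square)
      finally show ?thesis by simp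
    qed
  qed (use \<open>\<gamma>1 0 = \<gamma>2 0\<close> in \<open>auto simp: \<delta>_def\<close>)
  then show ?thesis by (simp add: \<delta>_def)
qed

lemma flow_eqI:
  assumes "\<gamma> 0 = x" and "\<And>s. (\<gamma> has_vector_derivative v (\<gamma> s)) (at s)"
  shows "flow v t x = \<gamma> t"
proof -
  have "(THE \<gamma>. \<gamma> 0 = x \<and> (\<forall>s. (\<gamma> has_vector_derivative v (\<gamma> s)) (at s))) = \<gamma>"
  proof (rule the_equality)
    fix \<gamma>' assume \<gamma>': "\<gamma>' 0 = x \<and> (\<forall>s. (\<gamma>' has_vector_derivative v (\<gamma>' s)) (at s))"
    show "\<gamma>' = \<gamma>"
    proof
      fix t show "\<gamma>' t = \<gamma> t"
        by (rule ode_solution_unique[OF _ assms(2)]) (use \<gamma>' assms(1) in auto)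
    qed
  qed (use assms in blast)
  then show ?thesis unfolding flow_def by simp
qed

lemma flow_zero: "flow v 0 x = x"
  and flow_has_vector_derivative: "((\<lambda>t. flow v t x) has_vector_derivative v (flow v s x)) (at s)"
proof -
  obtain \<gamma> where \<gamma>: "\<gamma> 0 = x" "\<And>s. (\<gamma> has_vector_derivative v (\<gamma> s)) (at s)"
    using ode_solution_exists by blast
  have "(\<lambda>t. flow v t x) = \<gamma>" using flow_eqI[OF \<gamma>] by (rule ext)
  then show "flow v 0 x = x" "((\<lambda>t. flow v t x) has_vector_derivative v (flow v s x)) (at s)"
    using \<gamma> by metis+
qed

lemma flow_add: "flow v (t + s) x = flow v s (flow v t x)"
proof -
  have "flow v s (flow v t x) = (\<lambda>s. flow v (t + s) x) s"
  proof (rule flow_eqI)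
    fix s
    have "((\<lambda>s. t + s) has_vector_derivative 1) (at s)"
      by (auto simp: has_real_derivative_iff_has_vector_derivative[symmetric] intro!: derivative_eq_intros)
    from vector_diff_chain_at[OF this flow_has_vector_derivative]
    show "((\<lambda>s. flow v (t + s) x) has_vector_derivative v (flow v (t + s) x)) (at s)"
      by (simp add: o_def)
  qed simp
  then show ?thesis by simp
qed

lemma flow_inverse: "flow v (- t) (flow v t x) = x"
  using flow_add[of t "- t" x] flow_zero by simp

lemma inj_flow: "inj (flow v t)"
  by (metis flow_inverse injI)

lemma flow_fixpoint: "v y = 0 \<Longrightarrow> flow v t y = y"
  using flow_eqI[of "\<lambda>_. y" y t] by auto

lemma flow_preserves:
  assumes "\<And>y. y \<notin> E \<Longrightarrow> v y = 0" and "x \<in> E"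
  shows "flow v t x \<in> E"
proof (rule ccontr)
  assume "flow v t x \<notin> E"
  then have "flow v (- t) (flow v t x) = flow v t x"
    by (intro flow_fixpoint assms(1))
  then show False using flow_inverse \<open>flow v t x \<notin> E\<close> \<open>x \<in> E\<close> by simp
qed

lemma flow_conf_zero: "flow_conf v 0 \<xi> = \<xi>"
  by (simp add: flow_conf_def flow_zero)

lemma flow_conf_shift: "flow_conf v s \<xi> = flow_conf v (s - t) (flow_conf v t \<xi>)"
  using flow_add[of t "s - t"] by (simp add: flow_conf_def image_image)

lemma card_flow_conf: "card (flow_conf v t \<xi>) = card \<xi>"
  unfolding flow_conf_def using inj_flow[of t] by (simp add: card_image inj_on_def inj_def)

text \<open>Positivity of \<open>det J\<close> along the orbit makes \<open>H\<close> the exponential of \<open>- U\<close>; the group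
  property moves the differentiability of \<open>U\<close> from time \<open>0\<close> to time \<open>t\<close>.\<close>
lemma Hfun_has_real_derivative:
  assumes pos: "\<And>s. detJ J (flow_conf v s \<xi>) > 0"
    and dU: "(\<lambda>h. Upot J (flow_conf v h (flow_conf v t \<xi>))) differentiable (at 0)"
  shows "(Hfun J v \<xi> has_real_derivative
      - detJ J (flow_conf v t \<xi>) * gradU J v (flow_conf v t \<xi>) / detJ J \<xi>) (at t)"
proof -
  define \<eta> where "\<eta> = flow_conf v t \<xi>"
  define g where "g h = Upot J (flow_conf v h \<eta>)" for h
  have "detJ J (flow_conf v s \<xi>) = exp (- g (s - t))" for s
    using pos[of s] flow_conf_shift[of s \<xi> t] by (simp add: g_def Upot_def \<eta>_def)
  then have H: "Hfun J v \<xi> = (\<lambda>s. exp (- g (s - t)) / detJ J \<xi>)"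
    by (simp add: fun_eq_iff Hfun_def)
  have "(g has_real_derivative gradU J v \<eta>) (at 0)"
    using dU unfolding g_def[abs_def] gradU_def \<eta>_def by (simp add: DERIV_deriv_iff_real_differentiable)
  then have "((\<lambda>s. g (s - t)) has_real_derivative gradU J v \<eta>) (at t)"
    using DERIV_shift[of g _ t "- t"] by simp
  then have "(Hfun J v \<xi> has_real_derivative exp (- g 0) * - gradU J v \<eta> / detJ J \<xi>) (at t)"
    using pos[of 0] unfolding H by (auto simp: flow_conf_zero intro!: derivative_eq_intros)
  moreover have "exp (- g 0) = detJ J \<eta>"
    using pos[of t] by (simp add: g_def Upot_def flow_conf_zero \<eta>_def)
  ultimately show ?thesis by (simp add: \<eta>_def)
qed

lemma Hfun_has_bounded_derivative:
  assumes pos: "\<And>s. detJ J (flow_conf v s \<xi>) > 0"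
    and dU: "(\<lambda>h. Upot J (flow_conf v h (flow_conf v t \<xi>))) differentiable (at 0)"
    and grad: "\<bar>gradU J v (flow_conf v t \<xi>)\<bar> \<le> B / detJ J (flow_conf v t \<xi>)"
  shows "\<exists>D. (Hfun J v \<xi> has_real_derivative D) (at t) \<and> \<bar>D\<bar> \<le> B / detJ J \<xi>"
proof (intro exI conjI)
  let ?\<eta> = "flow_conf v t \<xi>"
  show "(Hfun J v \<xi> has_real_derivative - detJ J ?\<eta> * gradU J v ?\<eta> / detJ J \<xi>) (at t)"
    using pos dU by (rule Hfun_has_real_derivative)
  have "detJ J ?\<eta> * \<bar>gradU J v ?\<eta>\<bar> \<le> B"
    using grad pos[of t] by (simp add: field_simps)
  moreover have "detJ J \<xi> > 0" using pos[of 0] by (simp add: flow_conf_zero)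
  ultimately show "\<bar>- detJ J ?\<eta> * gradU J v ?\<eta> / detJ J \<xi>\<bar> \<le> B / detJ J \<xi>"
    using pos[of t] by (simp add: abs_mult divide_right_mono)
qed

lemma flow_conf_subset:
  assumes "\<And>y. y \<notin> E \<Longrightarrow> v y = 0" and "\<xi> \<subseteq> E"
  shows "flow_conf v t \<xi> \<subseteq> E"
  using assms flow_preserves unfolding flow_conf_def by blast

end

section \<open>Fields in \<open>V\<^sub>0(E)\<close>\<close>

lemma compact_support_bounded:
  fixes f :: "'a::real_normed_vector \<Rightarrow> 'b::real_normed_vector"
  assumes "continuous_on UNIV f" and "compact K" and "\<And>x. x \<notin> K \<Longrightarrow> f x = 0"
  shows "\<exists>B. \<forall>x. norm (f x) \<le> B"
proof -
  have "bounded (f ` K)"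
    using assms(1,2) by (intro compact_imp_bounded compact_continuous_image) (auto intro: continuous_on_subset)
  then obtain B where "\<And>x. x \<in> K \<Longrightarrow> norm (f x) \<le> B" unfolding bounded_iff by blast
  then have "norm (f x) \<le> max B 0" for x
    using assms(3)[of x] by (cases "x \<in> K") force+
  then show ?thesis by blast
qed

lemma V0_vanishes_outside:
  assumes "v \<in> V0 E" and "y \<notin> E"
  shows "v y = 0"
proof -
  have "{x. v x \<noteq> 0} \<subseteq> E"
    using closure_subset assms(1) unfolding V0_def mem_Collect_eq by (meson order_trans)
  then show ?thesis using assms(2) by blast
qed

lemma compact_support_lipschitz:
  fixes v :: "'a::euclidean_space \<Rightarrow> 'b::real_normed_vector"
  assumes hd: "\<And>x. (v has_derivative D x) (at x)"
    and cD: "\<And>b. continuous_on UNIV (\<lambda>x. D x b)"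
    and K: "compact K" and vK: "\<And>x. x \<notin> K \<Longrightarrow> v x = 0"
  shows "\<exists>L>0. \<forall>x y. norm (v x - v y) \<le> L * norm (x - y)"
proof -
  have D0: "D x b = 0" if "x \<notin> K" for x b
  proof -
    have "(v has_derivative (\<lambda>h. 0)) (at x)"
      using compact_imp_closed[OF K] that vK
      by (intro has_derivative_transform_within_open[OF has_derivative_const, of "- K"]) auto
    then have "D x = (\<lambda>h. 0)" by (rule has_derivative_unique[OF hd])
    then show ?thesis by simp
  qed
  have "\<exists>B. \<forall>x. norm (D x b) \<le> B" for b
    using compact_support_bounded[OF cD K D0] .
  then obtain C where C: "\<And>b x. norm (D x b) \<le> C b" by metis
  define L where "L = (\<Sum>b\<in>Basis. C b)"
  have onorm: "onorm (D x) \<le> L" for x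
  proof -
    have "onorm (D x) \<le> (\<Sum>b\<in>Basis. norm (D x b))"
      by (rule onorm_componentwise[OF has_derivative_bounded_linear[OF hd]])
    also have "\<dots> \<le> L" unfolding L_def by (rule sum_mono) (rule C)
    finally show ?thesis .
  qed
  have "L \<ge> 0"
    using onorm[of 0] onorm_pos_le[OF has_derivative_bounded_linear[OF hd[of 0]]] by linarith
  moreover have "norm (v x - v y) \<le> (L + 1) * norm (x - y)" for x y
  proof -
    have "norm (v x - v y) \<le> L * norm (x - y)"
      by (rule differentiable_bound[where S = UNIV and f' = D]) (simp_all add: hd onorm)
    also have "\<dots> \<le> (L + 1) * norm (x - y)" by (simp add: mult_right_mono)
    finally show ?thesis .
  qed
  ultimately show ?thesis by (intro exI[of _ "L + 1"]) auto
qed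

lemma V0_bounded_lipschitz_field:
  assumes "v \<in> V0 E"
  obtains L M where "bounded_lipschitz_field v L M"
proof -
  define K where "K = closure {x. v x \<noteq> 0}"
  have smooth: "smooth_fun v" and K: "compact K"
    using assms unfolding V0_def K_def mem_Collect_eq by blast+
  have vK: "v x = 0" if "x \<notin> K" for x
    using that closure_subset[of "{x. v x \<noteq> 0}"] unfolding K_def by blast
  have dif: "iter_dderiv v us differentiable (at x)" for us x
    using smooth unfolding smooth_fun_def by blast
  have "continuous_on UNIV v"
    using dif[of "[]"] by (simp add: continuous_at_imp_continuous_on differentiable_imp_continuous_within)
  then obtain M where M: "\<And>x. norm (v x) \<le> M"
    using compact_support_bounded[of v K] K vK by blast
  have hd: "(v has_derivative frechet_derivative v (at x)) (at x)" for x
    using dif[of "[]" x] by (simp add: frechet_derivative_works)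
  have cD: "continuous_on UNIV (\<lambda>x. frechet_derivative v (at x) b)" for b
    using dif[of "[b]"]
    by (auto intro!: continuous_at_imp_continuous_on differentiable_imp_continuous_within)
  obtain L where "L > 0" "\<forall>x y. norm (v x - v y) \<le> L * norm (x - y)"
    using compact_support_lipschitz[of v "\<lambda>x. frechet_derivative v (at x)", OF hd cD K vK] by blast
  with M have "bounded_lipschitz_field v L M"
    by unfold_locales auto
  then show ?thesis by (rule that)
qed

section \<open>Growth of \<open>u\<^sub>n\<close>\<close>

lemma power_self_le_exp_fact: "real n ^ n \<le> exp (real n) * fact n"
proof -
  have "(\<lambda>k. real n ^ k /\<^sub>R fact k) sums exp (real n)" by (rule exp_converges)
  then have "real n ^ n /\<^sub>R fact n \<le> exp (real n)"
    using sum_le_suminf[of "\<lambda>k. real n ^ k /\<^sub>R fact k" "{n}"] by (auto simp: sums_iff)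
  then show ?thesis by (simp add: field_simps)
qed

lemma summable_power_div_sqrt_fact:
  assumes y: "y \<ge> 0"
  shows "summable (\<lambda>n. y ^ n / sqrt (fact n))"
proof (rule summable_ratio_test[of "1/2" "nat \<lceil>4 * y\<^sup>2\<rceil>"])
  fix n assume "n \<ge> nat \<lceil>4 * y\<^sup>2\<rceil>"
  then have "sqrt (4 * y\<^sup>2) \<le> sqrt (real (Suc n))" by (intro real_sqrt_le_mono) linarith
  then have yy: "2 * y \<le> sqrt (real (Suc n))" using y by (simp add: real_sqrt_mult)
  have "y ^ Suc n / sqrt (fact (Suc n)) = (y ^ n / sqrt (fact n)) * (y / sqrt (real (Suc n)))"
    by (simp only: fact_Suc of_nat_mult real_sqrt_mult) (simp add: field_simps)
  also have "\<dots> \<le> (y ^ n / sqrt (fact n)) * (1/2)"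
    using yy y by (intro mult_left_mono) (auto simp: divide_simps)
  finally show "norm (y ^ Suc n / sqrt (fact (Suc n))) \<le> 1/2 * norm (y ^ n / sqrt (fact n))"
    using y by (simp add: abs_of_nonneg)
qed simp

text \<open>\<open>n\<^sup>n\<^sup>/\<^sup>2 / n! \<le> e\<^sup>n\<^sup>/\<^sup>2 / sqrt (n!)\<close> by \<open>power_self_le_exp_fact\<close>.\<close>
lemma summable_sqrt_power_self_div_fact:
  fixes c x :: real assumes c: "c \<ge> 0"
  shows "summable (\<lambda>n. c * sqrt (real n) ^ n / fact n * \<bar>x\<bar> ^ n)"
proof (rule summable_comparison_test[OF _ summable_mult[OF summable_power_div_sqrt_fact, of "sqrt (exp 1) * \<bar>x\<bar>" c]])
  show "\<exists>N. \<forall>n\<ge>N. norm (c * sqrt (real n) ^ n / fact n * \<bar>x\<bar> ^ n) \<le> c * ((sqrt (exp 1) * \<bar>x\<bar>) ^ n / sqrt (fact n))"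
  proof (intro exI allI impI)
    fix n :: nat
    have "sqrt (real n) ^ n = sqrt (real n ^ n)" by (simp add: real_sqrt_power)
    also have "\<dots> \<le> sqrt (exp (real n) * fact n)" by (rule real_sqrt_le_mono[OF power_self_le_exp_fact])
    also have "\<dots> = sqrt (exp 1) ^ n * sqrt (fact n)"
      by (simp add: real_sqrt_mult real_sqrt_power[symmetric] exp_of_nat_mult[symmetric])
    finally have "sqrt (real n) ^ n \<le> sqrt (exp 1) ^ n * sqrt (fact n)" .
    then have "sqrt (fact n) * sqrt (real n) ^ n \<le> sqrt (fact n) * (sqrt (exp 1) ^ n * sqrt (fact n))"
      by (intro mult_left_mono) auto
    also have "\<dots> = fact n * sqrt (exp 1) ^ n"
      by (simp add: ac_simps flip: real_sqrt_mult)
    finally have "sqrt (real n) ^ n / fact n \<le> sqrt (exp 1) ^ n / sqrt (fact n)"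
      by (simp add: divide_simps ac_simps)
    then have "c * sqrt (real n) ^ n / fact n * \<bar>x\<bar> ^ n \<le> c * (sqrt (exp 1) ^ n / sqrt (fact n)) * \<bar>x\<bar> ^ n"
      using c by (simp add: mult_left_mono mult_right_mono times_divide_eq_right[symmetric] del: times_divide_eq_right)
    then show "norm (c * sqrt (real n) ^ n / fact n * \<bar>x\<bar> ^ n) \<le> c * ((sqrt (exp 1) * \<bar>x\<bar>) ^ n / sqrt (fact n))"
      using c by (simp add: power_mult_distrib abs_of_nonneg field_simps)
  qed
qed simp

lemma H3_Hfun_has_bounded_derivative:
  assumes hyp: "H3 E J" and v: "v \<in> V0 E"
  shows "\<exists>c>0. \<forall>\<xi> t. finite \<xi> \<and> \<xi> \<subseteq> E \<longrightarrow>
    (\<exists>D. (Hfun J v \<xi> has_real_derivative D) (at t) \<and>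
      \<bar>D\<bar> \<le> c * sqrt (real (card \<xi>)) ^ card \<xi> / detJ J \<xi>)"
proof -
  obtain L M where "bounded_lipschitz_field v L M" using V0_bounded_lipschitz_field[OF v] .
  then interpret bounded_lipschitz_field v L M .
  obtain pos: "\<forall>\<xi>. finite \<xi> \<and> \<xi> \<subseteq> E \<longrightarrow> detJ J \<xi> > 0"
    and dU: "\<forall>v\<in>V0 E. \<forall>\<xi>. finite \<xi> \<and> \<xi> \<subseteq> E \<longrightarrow> (\<lambda>t. Upot J (flow_conf v t \<xi>)) differentiable (at 0)"
    and gradient_bound: "\<forall>v\<in>V0 E. \<exists>c>0. \<forall>\<xi>. finite \<xi> \<and> \<xi> \<subseteq> E \<longrightarrow>
      \<bar>gradU J v \<xi>\<bar> \<le> c * sqrt (real (card \<xi>)) ^ card \<xi> / detJ J \<xi>"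
    using hyp unfolding H3_def by (elim conjE)
  obtain c where "c > 0" and grad: "\<forall>\<xi>. finite \<xi> \<and> \<xi> \<subseteq> E \<longrightarrow>
      \<bar>gradU J v \<xi>\<bar> \<le> c * sqrt (real (card \<xi>)) ^ card \<xi> / detJ J \<xi>"
    using bspec[OF gradient_bound v] by (elim exE conjE)
  have "\<exists>D. (Hfun J v \<xi> has_real_derivative D) (at t) \<and>
      \<bar>D\<bar> \<le> c * sqrt (real (card \<xi>)) ^ card \<xi> / detJ J \<xi>"
    if "finite \<xi>" "\<xi> \<subseteq> E" for \<xi> t
  proof (rule Hfun_has_bounded_derivative)
    have orbit: "finite (flow_conf v s \<xi>)" "flow_conf v s \<xi> \<subseteq> E" for s
      using that flow_conf_subset[OF V0_vanishes_outside[OF v]] by (simp_all add: flow_conf_def)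
    show "detJ J (flow_conf v s \<xi>) > 0" for s
      using pos orbit[of s] by simp
    show "(\<lambda>h. Upot J (flow_conf v h (flow_conf v t \<xi>))) differentiable (at 0)"
      using bspec[OF dU v] orbit[of t] by simp
    show "\<bar>gradU J v (flow_conf v t \<xi>)\<bar> \<le> c * sqrt (real (card \<xi>)) ^ card \<xi> / detJ J (flow_conf v t \<xi>)"
      using grad[rule_format, of "flow_conf v t \<xi>"] orbit[of t] by (simp add: card_flow_conf)
  qed
  with \<open>c > 0\<close> show ?thesis by blast
qed

theorem mainTheorem9:
  fixes E :: "'a::euclidean_space set" and J :: "'a \<Rightarrow> 'a \<Rightarrow> real"
  assumes E_domain: "open E" "connected E" "E \<noteq> {}"
    and J_sym: "\<forall>x y. J x y = J y x"
    and hyp: "H3 E J"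
  shows "\<forall>v\<in>V0 E. \<exists>u :: nat \<Rightarrow> real.
           (\<forall>n. u n \<ge> 0) \<and> (\<forall>x::real. summable (\<lambda>n. u n / fact n * \<bar>x\<bar> ^ n)) \<and>
           (\<forall>\<xi>. finite \<xi> \<and> \<xi> \<subseteq> E \<longrightarrow>
              (\<forall>t. (\<lambda>s. Hfun J v \<xi> s) differentiable (at t)) \<and>
              (\<forall>T>0. \<forall>t. \<bar>t\<bar> \<le> T \<longrightarrow>
                 \<bar>deriv (\<lambda>s. Hfun J v \<xi> s) t\<bar> \<le> u (card \<xi>) / detJ J \<xi>))"
proof
  fix v assume v: "v \<in> V0 E"
  obtain c where "c > 0" and H': "\<forall>\<xi> t. finite \<xi> \<and> \<xi> \<subseteq> E \<longrightarrow>
      (\<exists>D. (Hfun J v \<xi> has_real_derivative D) (at t) \<and>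
        \<bar>D\<bar> \<le> c * sqrt (real (card \<xi>)) ^ card \<xi> / detJ J \<xi>)"
    using H3_Hfun_has_bounded_derivative[OF hyp v] by blast
  define u where "u n = c * sqrt (real n) ^ n" for n
  show "\<exists>u. (\<forall>n. u n \<ge> 0) \<and> (\<forall>x::real. summable (\<lambda>n. u n / fact n * \<bar>x\<bar> ^ n)) \<and>
      (\<forall>\<xi>. finite \<xi> \<and> \<xi> \<subseteq> E \<longrightarrow> (\<forall>t. Hfun J v \<xi> differentiable (at t)) \<and>
        (\<forall>T>0. \<forall>t. \<bar>t\<bar> \<le> T \<longrightarrow> \<bar>deriv (Hfun J v \<xi>) t\<bar> \<le> u (card \<xi>) / detJ J \<xi>))"
  proof (intro exI[of _ u] conjI allI impI)
    show "u n \<ge> 0" for n using \<open>c > 0\<close> by (simp add: u_def)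
    show "summable (\<lambda>n. u n / fact n * \<bar>x\<bar> ^ n)" for x
      using summable_sqrt_power_self_div_fact[of c x] \<open>c > 0\<close> by (simp add: u_def)
    fix \<xi> :: "'a set" assume \<xi>: "finite \<xi> \<and> \<xi> \<subseteq> E"
    show "Hfun J v \<xi> differentiable (at t)" for t
      using H' \<xi> unfolding real_differentiable_def by blast
    fix T t :: real
    obtain D where "(Hfun J v \<xi> has_real_derivative D) (at t)"
      and "\<bar>D\<bar> \<le> c * sqrt (real (card \<xi>)) ^ card \<xi> / detJ J \<xi>"
      using H' \<xi> by blast
    then show "\<bar>deriv (Hfun J v \<xi>) t\<bar> \<le> u (card \<xi>) / detJ J \<xi>"
      by (simp add: u_def DERIV_imp_deriv)
  qed
qed

end
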